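(* Let $R$ be a commutative ring and $f\in R[[X]]$. Suppose $f_0=a_1a_2\cdots a_k$ where the $a_i\in R$ are pairwise coprime (i.e. $(a_i,a_j)=R$ for $i\neq j$), and choose $b_1,\dots,b_k\in R$ with $\sum_{i=1}^k b_i\prod_{j\neq i}a_j=1$. Then there exists a unique $g\in XR[[X]]$ such that $f=(a_1+b_1g)(a_2+b_2g)\cdots(a_k+b_kg)$, and the elements $a_i+b_ig$ are pairwise coprime in $R[[X]]$. In particular, if $f_0$ is a product of $k$ pairwise coprime nonzero nonunits of $R$, then $f$ is a product of $k$ pairwise coprime nonzero nonunits of $R[[X]]$.
   Context: $f_0$ denotes the constant term of $f$. *)

theory Defs
  imports "HOL-Computational_Algebra.Formal_Power_Series"
begin

text \<open>Two elements of a commutative ring are coprime in the sense of the paper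
  if the ideal they generate is the whole ring, i.e. (x, y) = R.\<close>
definition comaximal :: "'a::comm_ring_1 \<Rightarrow> 'a \<Rightarrow> bool" where
  "comaximal x y \<longleftrightarrow> (\<exists>u v. u * x + v * y = 1)"

end

theory Submission
  imports Defs
begin

text \<open>Write P g for the product of the a_i + b_i g. Replacing g by h changes P g by a
  multiple (g - h) d, where the constant term of d is the Bezout sum
  \<Sum> b_i \<Prod>_{j \<noteq> i} a_j = 1, so d is a unit. This gives uniqueness at once,
  and existence by the iteration g \<mapsto> g + (f - P g), which fixes one more coefficient
  of P g at each step. Comaximality and being a non-unit are both decided on constant
  terms, where the factors reduce to the a_i.\<close>

unbundle fps_syntax

lemma fps_nth_0_prod: "(\<Prod>i\<in>S. F i) $ 0 = (\<Prod>i\<in>S. (F i :: 'a::comm_ring_1 fps) $ 0)"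
  by (induction S rule: infinite_finite_induct) auto

lemma fps_X_power_dvd_iff:
  "fps_X ^ n dvd (f :: 'a::comm_ring_1 fps) \<longleftrightarrow> (\<forall>k<n. f $ k = 0)"
proof
  assume "fps_X ^ n dvd f"
  then show "\<forall>k<n. f $ k = 0" by (auto simp: dvd_def fps_X_power_mult_nth)
next
  assume "\<forall>k<n. f $ k = 0"
  then have "f = fps_X ^ n * fps_shift n f"
    by (intro fps_ext) (simp add: fps_X_power_mult_nth)
  then show "fps_X ^ n dvd f" by (metis dvd_triv_left)
qed

lemma fps_eq_0_if_X_power_dvd:
  assumes "\<And>n. fps_X ^ n dvd (f :: 'a::comm_ring_1 fps)"
  shows "f = 0"
proof (rule fps_ext)
  fix n show "f $ n = 0 $ n" using assms[of "Suc n"] unfolding fps_X_power_dvd_iff by simp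
qed

lemma fps_X_power_dvd_diagonal_diff:
  fixes G :: "nat \<Rightarrow> 'a::comm_ring_1 fps"
  assumes Cauchy: "\<And>n. fps_X ^ Suc n dvd G (Suc n) - G n"
  shows "fps_X ^ Suc n dvd Abs_fps (\<lambda>m. G m $ m) - G n"
proof -
  have stable: "G m $ k = G k $ k" if "k \<le> m" for k m
    using that
  proof (induction m rule: dec_induct)
    case (step m)
    have "(G (Suc m) - G m) $ k = 0"
      using Cauchy[of m] step.hyps unfolding fps_X_power_dvd_iff by simp
    with step.IH show ?case by simp
  qed simp
  show ?thesis unfolding fps_X_power_dvd_iff
  proof (intro allI impI)
    fix k assume "k < Suc n"
    then show "(Abs_fps (\<lambda>m. G m $ m) - G n) $ k = 0" using stable[of k n] by simp
  qed
qed

lemma fps_dvd_one_iff: "(f :: 'a::comm_ring_1 fps) dvd 1 \<longleftrightarrow> f $ 0 dvd 1"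
  using fps_is_left_unit_iff_zeroth_is_left_unit[of f] by (auto simp: dvd_def)

lemma comaximal_fps_if_comaximal_nth_0:
  fixes f g :: "'a::comm_ring_1 fps"
  assumes "comaximal (f $ 0) (g $ 0)"
  shows "comaximal f g"
proof -
  obtain u v where uv: "u * f $ 0 + v * g $ 0 = 1"
    using assms by (auto simp: comaximal_def)
  define w where "w = fps_const u * f + fps_const v * g"
  have "w dvd 1" using uv by (simp add: w_def fps_dvd_one_iff)
  then obtain w' where w': "1 = w * w'" by (rule dvdE)
  have "(fps_const u * w') * f + (fps_const v * w') * g = w * w'"
    by (simp add: w_def algebra_simps)
  then show ?thesis unfolding comaximal_def w'[symmetric] by blast
qed

lemma fps_equation_solvable:
  fixes P :: "'a::comm_ring_1 fps \<Rightarrow> 'a fps"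
  assumes P0: "P 0 $ 0 = f $ 0"
    and divided_difference:
      "\<And>g h. g $ 0 = 0 \<Longrightarrow> h $ 0 = 0 \<Longrightarrow> \<exists>d. d $ 0 = 1 \<and> P g - P h = (g - h) * d"
  shows "\<exists>g. g $ 0 = 0 \<and> f = P g"
proof -
  define G where "G = rec_nat 0 (\<lambda>_ g. g + (f - P g))"
  have G_Suc: "G (Suc n) = G n + (f - P (G n))" for n
    by (simp add: G_def)
  have approx: "G n $ 0 = 0 \<and> fps_X ^ Suc n dvd f - P (G n)" for n
  proof (induction n)
    case 0
    then show ?case using P0 unfolding fps_X_power_dvd_iff by (simp add: G_def)
  next
    case (Suc n)
    define e where "e = f - P (G n)"
    have "e $ 0 = 0" using Suc unfolding fps_X_power_dvd_iff by (simp add: e_def)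
    then have G_Suc_0: "G (Suc n) $ 0 = 0" using Suc by (simp add: G_Suc e_def)
    obtain d where d: "d $ 0 = 1" "P (G (Suc n)) - P (G n) = e * d"
      using divided_difference[OF G_Suc_0, of "G n"] Suc by (auto simp: G_Suc e_def)
    have "f - P (G (Suc n)) = e * (1 - d)"
      using d(2) by (simp add: e_def algebra_simps)
    moreover have "fps_X ^ Suc n * fps_X dvd e * (1 - d)"
    proof (rule mult_dvd_mono)
      show "fps_X ^ Suc n dvd e" using Suc by (simp add: e_def)
      show "fps_X dvd 1 - d" using d(1) fps_X_power_dvd_iff[of 1 "1 - d"] by simp
    qed
    ultimately show ?case using G_Suc_0 by (simp add: mult.commute)
  qed
  define g where "g = Abs_fps (\<lambda>m. G m $ m)"
  have g_approx: "fps_X ^ Suc n dvd g - G n" for n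
    unfolding g_def using approx by (intro fps_X_power_dvd_diagonal_diff) (simp add: G_Suc)
  have g0: "g $ 0 = 0" using approx[of 0] by (simp add: g_def)
  have "f - P g = 0"
  proof (rule fps_eq_0_if_X_power_dvd)
    fix n
    obtain d where "P g - P (G n) = (g - G n) * d"
      using divided_difference[OF g0, of "G n"] approx[of n] by blast
    then have "f - P g = (f - P (G n)) - (g - G n) * d" by (simp add: algebra_simps)
    also have "fps_X ^ Suc n dvd \<dots>"
      using approx[of n] g_approx[of n] by (metis dvd_diff dvd_mult2)
    finally show "fps_X ^ n dvd f - P g" by (rule dvd_trans[rotated]) (simp add: le_imp_power_dvd)
  qed
  with g0 show ?thesis by auto
qed

lemma fps_equation_solution_unique:
  fixes P :: "'a::comm_ring_1 fps \<Rightarrow> 'a fps"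
  assumes divided_difference:
      "\<And>g h. g $ 0 = 0 \<Longrightarrow> h $ 0 = 0 \<Longrightarrow> \<exists>d. d $ 0 = 1 \<and> P g - P h = (g - h) * d"
    and "g $ 0 = 0" "h $ 0 = 0" "P g = P h"
  shows "g = h"
proof -
  obtain d where d: "d $ 0 = 1" "(g - h) * d = 0"
    using divided_difference[of g h] assms(2-4) by auto
  obtain d' where "1 = d * d'"
    using d(1) by (metis dvdE dvd_refl fps_dvd_one_iff)
  then have "g - h = (g - h) * d * d'" by (simp add: mult.assoc)
  with d(2) show ?thesis by simp
qed

lemma fps_equation_exists_unique:
  fixes P :: "'a::comm_ring_1 fps \<Rightarrow> 'a fps"
  assumes "P 0 $ 0 = f $ 0"
    and "\<And>g h. g $ 0 = 0 \<Longrightarrow> h $ 0 = 0 \<Longrightarrow> \<exists>d. d $ 0 = 1 \<and> P g - P h = (g - h) * d"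
  shows "\<exists>!g. g $ 0 = 0 \<and> f = P g"
  using fps_equation_solvable[OF assms] fps_equation_solution_unique[OF assms(2)] by metis

lemma prod_diff_telescoping:
  fixes x y :: "nat \<Rightarrow> 'a::comm_ring_1"
  shows "(\<Prod>i<k. x i) - (\<Prod>i<k. y i) =
     (\<Sum>i<k. (x i - y i) * (\<Prod>j<i. x j) * (\<Prod>j\<in>{i<..<k}. y j))"
proof (induction k)
  case (Suc k)
  have "{i<..<Suc k} = insert k {i<..<k}" if "i < k" for i
    using that by auto
  then have "(\<Sum>i<k. (x i - y i) * (\<Prod>j<i. x j) * (\<Prod>j\<in>{i<..<Suc k}. y j))
     = (\<Sum>i<k. (x i - y i) * (\<Prod>j<i. x j) * (\<Prod>j\<in>{i<..<k}. y j)) * y k"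
    unfolding sum_distrib_right by (intro sum.cong) (simp_all add: mult_ac)
  moreover have "{k<..<Suc k} = {}" by auto
  ultimately have "(\<Sum>i<Suc k. (x i - y i) * (\<Prod>j<i. x j) * (\<Prod>j\<in>{i<..<Suc k}. y j))
     = ((\<Prod>i<k. x i) - (\<Prod>i<k. y i)) * y k + (x k - y k) * (\<Prod>j<k. x j)"
    by (simp add: Suc.IH)
  also have "\<dots> = (\<Prod>i<Suc k. x i) - (\<Prod>i<Suc k. y i)"
    by (simp add: algebra_simps)
  finally show ?case ..
qed simp

lemma prod_affine_diff:
  fixes a b :: "nat \<Rightarrow> 'a::comm_ring_1"
  shows "(\<Prod>i<k. a i + b i * x) - (\<Prod>i<k. a i + b i * y) =
     (x - y) * (\<Sum>i<k. b i * (\<Prod>j<i. a j + b j * x) * (\<Prod>j\<in>{i<..<k}. a j + b j * y))"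
  unfolding prod_diff_telescoping sum_distrib_left
  by (rule sum.cong) (simp_all add: algebra_simps)

lemma fps_prod_affine_divided_difference:
  fixes a b :: "nat \<Rightarrow> 'a::comm_ring_1"
  assumes bezout: "(\<Sum>i<k. b i * (\<Prod>j\<in>{..<k} - {i}. a j)) = 1"
    and "g $ 0 = 0" "h $ 0 = 0"
  shows "\<exists>d. d $ 0 = 1 \<and>
    (\<Prod>i<k. fps_const (a i) + fps_const (b i) * g) - (\<Prod>i<k. fps_const (a i) + fps_const (b i) * h)
      = (g - h) * d"
proof -
  define d where "d = (\<Sum>i<k. fps_const (b i) * (\<Prod>j<i. fps_const (a j) + fps_const (b j) * g)
      * (\<Prod>j\<in>{i<..<k}. fps_const (a j) + fps_const (b j) * h))"
  have split: "(\<Prod>j\<in>{..<k} - {i}. a j) = (\<Prod>j<i. a j) * (\<Prod>j\<in>{i<..<k}. a j)" if "i < k" for i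
  proof -
    have "{..<k} - {i} = {..<i} \<union> {i<..<k}" using that by auto
    moreover have "{..<i} \<inter> {i<..<k} = {}" by auto
    ultimately show ?thesis by (simp add: prod.union_disjoint)
  qed
  have "d $ 0 = (\<Sum>i<k. b i * (\<Prod>j<i. a j) * (\<Prod>j\<in>{i<..<k}. a j))"
    using assms(2,3) by (simp add: d_def fps_sum_nth fps_nth_0_prod)
  also have "\<dots> = (\<Sum>i<k. b i * (\<Prod>j\<in>{..<k} - {i}. a j))"
    by (rule sum.cong) (simp_all add: split mult.assoc)
  also have "\<dots> = 1" by (rule bezout)
  finally have "d $ 0 = 1" .
  moreover have "(\<Prod>i<k. fps_const (a i) + fps_const (b i) * g)
      - (\<Prod>i<k. fps_const (a i) + fps_const (b i) * h) = (g - h) * d"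
    unfolding d_def by (rule prod_affine_diff)
  ultimately show ?thesis by blast
qed

theorem proposition2p4:
  fixes f :: "'a::comm_ring_1 fps" and k :: nat and a b :: "nat \<Rightarrow> 'a"
  assumes f0: "fps_nth f 0 = (\<Prod>i<k. a i)"
    and cop: "\<And>i j. i < k \<Longrightarrow> j < k \<Longrightarrow> i \<noteq> j \<Longrightarrow> comaximal (a i) (a j)"
    and bez: "(\<Sum>i<k. b i * (\<Prod>j\<in>{..<k} - {i}. a j)) = 1"
  shows "(\<exists>!g. fps_nth g 0 = 0 \<and>
             f = (\<Prod>i<k. fps_const (a i) + fps_const (b i) * g))
       \<and> (\<forall>g. fps_nth g 0 = 0 \<and>
             f = (\<Prod>i<k. fps_const (a i) + fps_const (b i) * g) \<longrightarrow>
             (\<forall>i<k. \<forall>j<k. i \<noteq> j \<longrightarrow>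
                comaximal (fps_const (a i) + fps_const (b i) * g)
                          (fps_const (a j) + fps_const (b j) * g)))
       \<and> ((\<forall>i<k. a i \<noteq> 0 \<and> \<not> a i dvd 1) \<longrightarrow>
             (\<exists>h :: nat \<Rightarrow> 'a fps. f = (\<Prod>i<k. h i)
                \<and> (\<forall>i<k. h i \<noteq> 0 \<and> \<not> h i dvd 1)
                \<and> (\<forall>i<k. \<forall>j<k. i \<noteq> j \<longrightarrow> comaximal (h i) (h j))))"
proof -
  let ?P = "\<lambda>g. \<Prod>i<k. fps_const (a i) + fps_const (b i) * g"
  have unique: "\<exists>!g. g $ 0 = 0 \<and> f = ?P g"
  proof (rule fps_equation_exists_unique)
    show "?P 0 $ 0 = f $ 0" using f0 by (simp add: fps_nth_0_prod)
  qed (rule fps_prod_affine_divided_difference[OF bez])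
  have comaximal_factors:
    "comaximal (fps_const (a i) + fps_const (b i) * g) (fps_const (a j) + fps_const (b j) * g)"
    if "g $ 0 = 0" "i < k" "j < k" "i \<noteq> j" for g i j
    using cop[OF that(2-4)] that(1) by (intro comaximal_fps_if_comaximal_nth_0) simp
  obtain g where g: "g $ 0 = 0" "f = ?P g" using unique by blast
  have factor_nth_0: "(fps_const (a i) + fps_const (b i) * g) $ 0 = a i" for i
    using g(1) by simp
  have "\<not> (fps_const (a i) + fps_const (b i) * g) dvd 1" if "\<not> a i dvd 1" for i
    using that factor_nth_0[of i] fps_dvd_one_iff by metis
  moreover have "fps_const (a i) + fps_const (b i) * g \<noteq> 0" if "a i \<noteq> 0" for i
    using that factor_nth_0[of i] by (metis fps_zero_nth)
  ultimately show ?thesis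
    using unique comaximal_factors g
    by (intro conjI impI allI exI[of _ "\<lambda>i. fps_const (a i) + fps_const (b i) * g"]) auto
qed

end
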